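(* Let $g_d=(g_a^j)$ be a discrete $G$-valued field and consider the discrete action $\bar{\mathfrak{S}}_d(g_d)=\sum_{j=0}^{N-1}\sum_{a=0}^{A-1}\bar{\mathcal{L}}_d(\triangle_a^j,g_a^j,\xi_a^j,\eta_a^j)$. (A) $\bar{\mathfrak{S}}_d$ is stationary at $g_d$ for all variations vanishing at all boundary nodes ($j\in\{0,N\}$ or $a\in\{0,A\}$) if and only if the Lie group DCEL equations hold: \[ \tfrac{1}{\Delta t}\big(\mu_a^j-\operatorname{Ad}^*_{\tau(\Delta t\xi_a^{j-1})}\mu_a^{j-1}\big)+\tfrac{1}{\Delta s}\big(\lambda_a^j-\operatorname{Ad}^*_{\tau(\Delta s\eta_{a-1}^j)}\lambda_{a-1}^j\big)=(g_a^j)^{-1}D_g\bar{\mathcal{L}}_a^j,\quad j=1,\dots,N-1,\ a=1,\dots,A-1. \] (B) It is stationary for all variations with $\delta g_a^0=\delta g_a^N=0$ ($a=0,\dots,A$) iff the Lie group DCEL equations hold together with, for $j=1,\dots,N-1$, \[ \tfrac{1}{\Delta t}\big(\mu_0^j-\operatorname{Ad}^*_{\tau(\Delta t\xi_0^{j-1})}\mu_0^{j-1}\big)+\tfrac{1}{\Delta s}\lambda_0^j=(g_0^j)^{-1}D_g\bar{\mathcal{L}}_0^j,\qquad \tfrac{1}{\Delta s}\operatorname{Ad}^*_{\tau(\Delta s\eta_{A-1}^j)}\lambda_{A-1}^j=0 . \] (C) It is stationary for all variations with $\delta g_0^j=\delta g_A^j=0$ ($j=0,\dots,N$) iff the Lie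 group DCEL equations hold together with, for $a=1,\dots,A-1$, \[ \tfrac{1}{\Delta t}\mu_a^0+\tfrac{1}{\Delta s}\big(\lambda_a^0-\operatorname{Ad}^*_{\tau(\Delta s\eta_{a-1}^0)}\lambda_{a-1}^0\big)=(g_a^0)^{-1}D_g\bar{\mathcal{L}}_a^0,\qquad \tfrac{1}{\Delta t}\operatorname{Ad}^*_{\tau(\Delta t\xi_a^{N-1})}\mu_a^{N-1}=0 . \]
   Context: Fix integers $N,A\ge 2$, nodes $(j,a)$, $0\le j\le N$, $0\le a\le A$, triangles $\triangle_a^j=((j,a),(j+1,a),(j,a+1))$ for $j\le N-1$, $a\le A-1$. $G$ is a Lie group with Lie algebra $\mathfrak{g}$; a discrete field is $g_d=(g_a^j)$, $g_a^j\in G$. For $\alpha\in T_g^*G$, $g^{-1}\alpha:=T_e^*L_g(\alpha)\in\mathfrak{g}^*$; $\operatorname{Ad}^*_h$ is the dual of $\operatorname{Ad}_h$. Fix a local diffeomorphism $\tau:\mathfrak{g}\to G$ near $0$ with $\tau(0)=e$, ${\rm d}^R\tau^{-1}_\xi(\eta):=T_{\tau(\xi)}\tau^{-1}(\eta\,\tau(\xi))$. Fix $\Delta t,\Delta s>0$ and set $\xi_a^j=\tau^{-1}((g_a^j)^{-1}g_a^{j+1})/\Delta t$, $\eta_a^j=\tau^{-1}((g_a^j)^{-1}g_{a+1}^j)/\Delta s$ (assumed in the domain of $\tau^{-1}$). A discrete trivialized Lagrangian is smooth $\bar{\mathcal{L}}_d(\triangle_a^j,\cdot,\cdot,\cdot):G\times\mathfrak{g}\times\mathfrak{g}\to\mathbb{R}$;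 $\bar{\mathcal{L}}_a^j$ is its value at $(g_a^j,\xi_a^j,\eta_a^j)$ and $D_g,D_\xi,D_\eta$ its partial derivatives. $\mu_a^j=({\rm d}^R\tau^{-1}_{\Delta t\xi_a^j})^*D_\xi\bar{\mathcal{L}}_a^j$, $\lambda_a^j=({\rm d}^R\tau^{-1}_{\Delta s\eta_a^j})^*D_\eta\bar{\mathcal{L}}_a^j$. Variations are $\delta g_a^j\in T_{g_a^j}G$. *)

theory Defs
  imports "HOL-Analysis.Analysis"
begin

section \<open>Smoothness, embedded submanifolds, Lie groups (extrinsic model)\<close>

text \<open>C-infinity on an open set: a family F of all iterated directional derivatives exists,
  F [] = f and F (v # vs) is the derivative of F vs in direction v.\<close>
definition smooth_on :: "'a::euclidean_space set \<Rightarrow> ('a \<Rightarrow> 'b::real_normed_vector) \<Rightarrow> bool" where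
  "smooth_on S f \<longleftrightarrow> open S \<and>
     (\<exists>F :: 'a list \<Rightarrow> 'a \<Rightarrow> 'b. (\<forall>x\<in>S. F [] x = f x) \<and>
        (\<forall>vs. \<forall>x\<in>S. (F vs has_derivative (\<lambda>v. F (v # vs) x)) (at x)))"

text \<open>Embedded smooth submanifold of a Euclidean space, via slice charts.\<close>
definition embedded_submanifold :: "'e::euclidean_space set \<Rightarrow> bool" where
  "embedded_submanifold M \<longleftrightarrow> (\<forall>p\<in>M. \<exists>U V (\<phi>::'e \<Rightarrow> 'e) \<psi> S.
     open U \<and> p \<in> U \<and> open V \<and> subspace S \<and> smooth_on U \<phi> \<and> smooth_on V \<psi> \<and>
     \<phi> ` U = V \<and> (\<forall>x\<in>U. \<psi> (\<phi> x) = x) \<and> (\<forall>y\<in>V. \<phi> (\<psi> y) = y) \<and>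
     \<phi> ` (M \<inter> U) = V \<inter> S)"

text \<open>A Lie group G embedded in the Euclidean space 'e, with multiplication m, inversion iv
  and identity e; m and iv are smooth maps (given by smooth extensions to open neighbourhoods).\<close>
definition lie_group :: "'e::euclidean_space set \<Rightarrow> ('e \<Rightarrow> 'e \<Rightarrow> 'e) \<Rightarrow> ('e \<Rightarrow> 'e) \<Rightarrow> 'e \<Rightarrow> bool" where
  "lie_group G m iv e \<longleftrightarrow> embedded_submanifold G \<and> e \<in> G \<and>
     (\<forall>x\<in>G. \<forall>y\<in>G. m x y \<in> G) \<and>
     (\<forall>x\<in>G. \<forall>y\<in>G. \<forall>z\<in>G. m (m x y) z = m x (m y z)) \<and>
     (\<forall>x\<in>G. m e x = x \<and> m x e = x) \<and>
     (\<forall>x\<in>G. iv x \<in> G \<and> m (iv x) x = e \<and> m x (iv x) = e) \<and>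
     (\<exists>W. G \<times> G \<subseteq> W \<and> smooth_on W (\<lambda>(x, y). m x y)) \<and>
     (\<exists>W. G \<subseteq> W \<and> smooth_on W iv)"

definition tangent_space :: "'e::euclidean_space set \<Rightarrow> 'e \<Rightarrow> 'e set" where
  "tangent_space G p = {v. \<exists>(\<gamma>::real \<Rightarrow> 'e) \<epsilon>. \<epsilon> > 0 \<and> \<gamma> 0 = p \<and>
      (\<forall>t. \<bar>t\<bar> < \<epsilon> \<longrightarrow> \<gamma> t \<in> G) \<and> (\<gamma> has_vector_derivative v) (at 0)}"

text \<open>Lie algebra = T_e G.  Elements of the dual are represented as functions 'e => real,
  only their values on the Lie algebra being relevant.\<close>
definition lie_alg :: "'e::euclidean_space set \<Rightarrow> 'e \<Rightarrow> 'e set" where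
  "lie_alg G e = tangent_space G e"

definition dLeft :: "('e::euclidean_space \<Rightarrow> 'e \<Rightarrow> 'e) \<Rightarrow> 'e \<Rightarrow> 'e \<Rightarrow> 'e \<Rightarrow> 'e" where
  "dLeft m e g \<zeta> = frechet_derivative (m g) (at e) \<zeta>"

definition dRight :: "('e::euclidean_space \<Rightarrow> 'e \<Rightarrow> 'e) \<Rightarrow> 'e \<Rightarrow> 'e \<Rightarrow> 'e \<Rightarrow> 'e" where
  "dRight m e h \<zeta> = frechet_derivative (\<lambda>x. m x h) (at e) \<zeta>"

definition Ad :: "('e::euclidean_space \<Rightarrow> 'e \<Rightarrow> 'e) \<Rightarrow> ('e \<Rightarrow> 'e) \<Rightarrow> 'e \<Rightarrow> 'e \<Rightarrow> 'e \<Rightarrow> 'e" where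
  "Ad m iv e h \<zeta> = frechet_derivative (\<lambda>x. m (m h x) (iv h)) (at e) \<zeta>"

definition Adstar :: "('e::euclidean_space \<Rightarrow> 'e \<Rightarrow> 'e) \<Rightarrow> ('e \<Rightarrow> 'e) \<Rightarrow> 'e \<Rightarrow> 'e \<Rightarrow> ('e \<Rightarrow> real) \<Rightarrow> ('e \<Rightarrow> real)" where
  "Adstar m iv e h \<mu> = (\<lambda>\<zeta>. \<mu> (Ad m iv e h \<zeta>))"

definition dRtauinv :: "('e::euclidean_space \<Rightarrow> 'e \<Rightarrow> 'e) \<Rightarrow> 'e \<Rightarrow> ('e \<Rightarrow> 'e) \<Rightarrow> ('e \<Rightarrow> 'e) \<Rightarrow> 'e \<Rightarrow> 'e \<Rightarrow> 'e" where
  "dRtauinv m e \<tau> \<tau>inv \<xi> \<eta> = frechet_derivative \<tau>inv (at (\<tau> \<xi>)) (dRight m e (\<tau> \<xi>) \<eta>)"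

definition tau_chart :: "'e::euclidean_space set \<Rightarrow> 'e \<Rightarrow> ('e \<Rightarrow> 'e) \<Rightarrow> ('e \<Rightarrow> 'e) \<Rightarrow> 'e set \<Rightarrow> 'e set \<Rightarrow> bool" where
  "tau_chart G e \<tau> \<tau>inv U V \<longleftrightarrow> open U \<and> 0 \<in> U \<and> open V \<and> e \<in> V \<and> \<tau> 0 = e \<and>
     (\<forall>\<xi>\<in>U \<inter> lie_alg G e. \<tau> \<xi> \<in> G \<inter> V \<and> \<tau>inv (\<tau> \<xi>) = \<xi>) \<and>
     (\<forall>h\<in>G \<inter> V. \<tau>inv h \<in> U \<inter> lie_alg G e \<and> \<tau> (\<tau>inv h) = h) \<and>
     smooth_on U \<tau> \<and> smooth_on V \<tau>inv"

text \<open>A discrete field is gd :: nat => nat => 'e, gd j a = g_a^j.\<close>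
definition dxi :: "('e::euclidean_space \<Rightarrow> 'e \<Rightarrow> 'e) \<Rightarrow> ('e \<Rightarrow> 'e) \<Rightarrow> ('e \<Rightarrow> 'e) \<Rightarrow> real \<Rightarrow> (nat \<Rightarrow> nat \<Rightarrow> 'e) \<Rightarrow> nat \<Rightarrow> nat \<Rightarrow> 'e" where
  "dxi m iv \<tau>inv dt gd j a = (1 / dt) *\<^sub>R \<tau>inv (m (iv (gd j a)) (gd (Suc j) a))"

definition deta :: "('e::euclidean_space \<Rightarrow> 'e \<Rightarrow> 'e) \<Rightarrow> ('e \<Rightarrow> 'e) \<Rightarrow> ('e \<Rightarrow> 'e) \<Rightarrow> real \<Rightarrow> (nat \<Rightarrow> nat \<Rightarrow> 'e) \<Rightarrow> nat \<Rightarrow> nat \<Rightarrow> 'e" where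
  "deta m iv \<tau>inv ds gd j a = (1 / ds) *\<^sub>R \<tau>inv (m (iv (gd j a)) (gd j (Suc a)))"

text \<open>Ld j a g xi eta = discrete trivialized Lagrangian on triangle (j,a).\<close>
definition action :: "('e::euclidean_space \<Rightarrow> 'e \<Rightarrow> 'e) \<Rightarrow> ('e \<Rightarrow> 'e) \<Rightarrow> ('e \<Rightarrow> 'e) \<Rightarrow>
    (nat \<Rightarrow> nat \<Rightarrow> 'e \<Rightarrow> 'e \<Rightarrow> 'e \<Rightarrow> real) \<Rightarrow> real \<Rightarrow> real \<Rightarrow> nat \<Rightarrow> nat \<Rightarrow> (nat \<Rightarrow> nat \<Rightarrow> 'e) \<Rightarrow> real" where
  "action m iv \<tau>inv Ld dt ds N A gd =
     (\<Sum>j<N. \<Sum>a<A. Ld j a (gd j a) (dxi m iv \<tau>inv dt gd j a) (deta m iv \<tau>inv ds gd j a))"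

text \<open>mu_a^j = (d^R tau^{-1}_{dt xi})^* D_xi L,  lambda_a^j = (d^R tau^{-1}_{ds eta})^* D_eta L.\<close>
definition dmu :: "('e::euclidean_space \<Rightarrow> 'e \<Rightarrow> 'e) \<Rightarrow> ('e \<Rightarrow> 'e) \<Rightarrow> 'e \<Rightarrow> ('e \<Rightarrow> 'e) \<Rightarrow> ('e \<Rightarrow> 'e) \<Rightarrow>
    (nat \<Rightarrow> nat \<Rightarrow> 'e \<Rightarrow> 'e \<Rightarrow> 'e \<Rightarrow> real) \<Rightarrow> real \<Rightarrow> real \<Rightarrow> (nat \<Rightarrow> nat \<Rightarrow> 'e) \<Rightarrow> nat \<Rightarrow> nat \<Rightarrow> 'e \<Rightarrow> real" where
  "dmu m iv e \<tau> \<tau>inv Ld dt ds gd j a = (\<lambda>\<zeta>.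
     frechet_derivative (\<lambda>y. Ld j a (gd j a) y (deta m iv \<tau>inv ds gd j a))
       (at (dxi m iv \<tau>inv dt gd j a))
       (dRtauinv m e \<tau> \<tau>inv (dt *\<^sub>R dxi m iv \<tau>inv dt gd j a) \<zeta>))"

definition dlam :: "('e::euclidean_space \<Rightarrow> 'e \<Rightarrow> 'e) \<Rightarrow> ('e \<Rightarrow> 'e) \<Rightarrow> 'e \<Rightarrow> ('e \<Rightarrow> 'e) \<Rightarrow> ('e \<Rightarrow> 'e) \<Rightarrow>
    (nat \<Rightarrow> nat \<Rightarrow> 'e \<Rightarrow> 'e \<Rightarrow> 'e \<Rightarrow> real) \<Rightarrow> real \<Rightarrow> real \<Rightarrow> (nat \<Rightarrow> nat \<Rightarrow> 'e) \<Rightarrow> nat \<Rightarrow> nat \<Rightarrow> 'e \<Rightarrow> real" where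
  "dlam m iv e \<tau> \<tau>inv Ld dt ds gd j a = (\<lambda>\<zeta>.
     frechet_derivative (\<lambda>z. Ld j a (gd j a) (dxi m iv \<tau>inv dt gd j a) z)
       (at (deta m iv \<tau>inv ds gd j a))
       (dRtauinv m e \<tau> \<tau>inv (ds *\<^sub>R deta m iv \<tau>inv ds gd j a) \<zeta>))"

text \<open>(g_a^j)^{-1} D_g L_a^j  =  T_e^* L_g (D_g L), as a functional on the Lie algebra.\<close>
definition dDgL :: "('e::euclidean_space \<Rightarrow> 'e \<Rightarrow> 'e) \<Rightarrow> ('e \<Rightarrow> 'e) \<Rightarrow> 'e \<Rightarrow> ('e \<Rightarrow> 'e) \<Rightarrow>
    (nat \<Rightarrow> nat \<Rightarrow> 'e \<Rightarrow> 'e \<Rightarrow> 'e \<Rightarrow> real) \<Rightarrow> real \<Rightarrow> real \<Rightarrow> (nat \<Rightarrow> nat \<Rightarrow> 'e) \<Rightarrow> nat \<Rightarrow> nat \<Rightarrow> 'e \<Rightarrow> real" where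
  "dDgL m iv e \<tau>inv Ld dt ds gd j a = (\<lambda>\<zeta>.
     frechet_derivative (\<lambda>x. Ld j a x (dxi m iv \<tau>inv dt gd j a) (deta m iv \<tau>inv ds gd j a))
       (at (gd j a)) (dLeft m e (gd j a) \<zeta>))"

definition stationary :: "'e::euclidean_space set \<Rightarrow> ((nat \<Rightarrow> nat \<Rightarrow> 'e) \<Rightarrow> real) \<Rightarrow>
    nat \<Rightarrow> nat \<Rightarrow> (nat \<Rightarrow> nat \<Rightarrow> bool) \<Rightarrow> (nat \<Rightarrow> nat \<Rightarrow> 'e) \<Rightarrow> bool" where
  "stationary G S N A fixed gd \<longleftrightarrow>
     (\<forall>(dg :: nat \<Rightarrow> nat \<Rightarrow> 'e) (\<gamma> :: real \<Rightarrow> nat \<Rightarrow> nat \<Rightarrow> 'e).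
        (\<forall>j\<le>N. \<forall>a\<le>A. dg j a \<in> tangent_space G (gd j a)) \<and>
        (\<forall>j\<le>N. \<forall>a\<le>A. fixed j a \<longrightarrow> dg j a = 0) \<and>
        (\<exists>\<epsilon>>0. \<forall>t. \<bar>t\<bar> < \<epsilon> \<longrightarrow> (\<forall>j\<le>N. \<forall>a\<le>A. \<gamma> t j a \<in> G)) \<and>
        (\<forall>j\<le>N. \<forall>a\<le>A. \<gamma> 0 j a = gd j a \<and> ((\<lambda>t. \<gamma> t j a) has_vector_derivative dg j a) (at 0))
        \<longrightarrow> ((\<lambda>t. S (\<gamma> t)) has_real_derivative 0) (at 0))"

definition DCEL :: "'e::euclidean_space set \<Rightarrow> ('e \<Rightarrow> 'e \<Rightarrow> 'e) \<Rightarrow> ('e \<Rightarrow> 'e) \<Rightarrow> 'e \<Rightarrow> ('e \<Rightarrow> 'e) \<Rightarrow> ('e \<Rightarrow> 'e) \<Rightarrow>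
    (nat \<Rightarrow> nat \<Rightarrow> 'e \<Rightarrow> 'e \<Rightarrow> 'e \<Rightarrow> real) \<Rightarrow> real \<Rightarrow> real \<Rightarrow> nat \<Rightarrow> nat \<Rightarrow> (nat \<Rightarrow> nat \<Rightarrow> 'e) \<Rightarrow> bool" where
  "DCEL G m iv e \<tau> \<tau>inv Ld dt ds N A gd \<longleftrightarrow>
     (\<forall>j\<in>{1..N-1}. \<forall>a\<in>{1..A-1}. \<forall>\<zeta>\<in>lie_alg G e.
        (1/dt) * (dmu m iv e \<tau> \<tau>inv Ld dt ds gd j a \<zeta>
                  - Adstar m iv e (\<tau> (dt *\<^sub>R dxi m iv \<tau>inv dt gd (j-1) a))
                      (dmu m iv e \<tau> \<tau>inv Ld dt ds gd (j-1) a) \<zeta>)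
      + (1/ds) * (dlam m iv e \<tau> \<tau>inv Ld dt ds gd j a \<zeta>
                  - Adstar m iv e (\<tau> (ds *\<^sub>R deta m iv \<tau>inv ds gd j (a-1)))
                      (dlam m iv e \<tau> \<tau>inv Ld dt ds gd j (a-1)) \<zeta>)
      = dDgL m iv e \<tau>inv Ld dt ds gd j a \<zeta>)"

definition boundary_B :: "'e::euclidean_space set \<Rightarrow> ('e \<Rightarrow> 'e \<Rightarrow> 'e) \<Rightarrow> ('e \<Rightarrow> 'e) \<Rightarrow> 'e \<Rightarrow> ('e \<Rightarrow> 'e) \<Rightarrow> ('e \<Rightarrow> 'e) \<Rightarrow>
    (nat \<Rightarrow> nat \<Rightarrow> 'e \<Rightarrow> 'e \<Rightarrow> 'e \<Rightarrow> real) \<Rightarrow> real \<Rightarrow> real \<Rightarrow> nat \<Rightarrow> nat \<Rightarrow> (nat \<Rightarrow> nat \<Rightarrow> 'e) \<Rightarrow> bool" where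
  "boundary_B G m iv e \<tau> \<tau>inv Ld dt ds N A gd \<longleftrightarrow>
     (\<forall>j\<in>{1..N-1}. \<forall>\<zeta>\<in>lie_alg G e.
        (1/dt) * (dmu m iv e \<tau> \<tau>inv Ld dt ds gd j 0 \<zeta>
                  - Adstar m iv e (\<tau> (dt *\<^sub>R dxi m iv \<tau>inv dt gd (j-1) 0))
                      (dmu m iv e \<tau> \<tau>inv Ld dt ds gd (j-1) 0) \<zeta>)
      + (1/ds) * dlam m iv e \<tau> \<tau>inv Ld dt ds gd j 0 \<zeta>
      = dDgL m iv e \<tau>inv Ld dt ds gd j 0 \<zeta>
      \<and> (1/ds) * Adstar m iv e (\<tau> (ds *\<^sub>R deta m iv \<tau>inv ds gd j (A-1)))
                    (dlam m iv e \<tau> \<tau>inv Ld dt ds gd j (A-1)) \<zeta> = 0)"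

definition boundary_C :: "'e::euclidean_space set \<Rightarrow> ('e \<Rightarrow> 'e \<Rightarrow> 'e) \<Rightarrow> ('e \<Rightarrow> 'e) \<Rightarrow> 'e \<Rightarrow> ('e \<Rightarrow> 'e) \<Rightarrow> ('e \<Rightarrow> 'e) \<Rightarrow>
    (nat \<Rightarrow> nat \<Rightarrow> 'e \<Rightarrow> 'e \<Rightarrow> 'e \<Rightarrow> real) \<Rightarrow> real \<Rightarrow> real \<Rightarrow> nat \<Rightarrow> nat \<Rightarrow> (nat \<Rightarrow> nat \<Rightarrow> 'e) \<Rightarrow> bool" where
  "boundary_C G m iv e \<tau> \<tau>inv Ld dt ds N A gd \<longleftrightarrow>
     (\<forall>a\<in>{1..A-1}. \<forall>\<zeta>\<in>lie_alg G e.
        (1/dt) * dmu m iv e \<tau> \<tau>inv Ld dt ds gd 0 a \<zeta>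
      + (1/ds) * (dlam m iv e \<tau> \<tau>inv Ld dt ds gd 0 a \<zeta>
                  - Adstar m iv e (\<tau> (ds *\<^sub>R deta m iv \<tau>inv ds gd 0 (a-1)))
                      (dlam m iv e \<tau> \<tau>inv Ld dt ds gd 0 (a-1)) \<zeta>)
      = dDgL m iv e \<tau>inv Ld dt ds gd 0 a \<zeta>
      \<and> (1/dt) * Adstar m iv e (\<tau> (dt *\<^sub>R dxi m iv \<tau>inv dt gd (N-1) a))
                    (dmu m iv e \<tau> \<tau>inv Ld dt ds gd (N-1) a) \<zeta> = 0)"

end

theory Submission
  imports Defs
begin

text \<open>
  For every one-parameter family of discrete fields \<gamma> t through gd, the derivative
  at t = 0 of the action is computed triangle by triangle with the chain rule: the variation of
  \<xi>_a^j = \<tau>^{-1}(g^{-1} g')/\<Delta>t is d^R\<tau>^{-1} applied to Ad_{\<tau>(\<Delta>t \<xi>)} of the trivialized variation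
  at the head of the edge minus that at its tail.  Pairing with D_\<xi> L and D_\<eta> L produces the
  momenta \<mu>, \<lambda> and their coadjoint transports.  Regrouping the sum over triangles as a sum over
  nodes (discrete summation by parts) writes the first variation as
  \<Sum> nodes nodal_EL j a (trivialized variation at (j, a)).  Stationarity for variations vanishing
  at a prescribed set of fixed nodes is then equivalent to nodal_EL vanishing on the Lie algebra
  at every free node (for the converse, test with variations supported at a single node).
  Finally, at interior nodes nodal_EL = 0 is the DCEL equation, and at the nodes of the sides it
  is the corresponding boundary equation of parts (B) and (C).
\<close>

lemma smooth_on_differentiable:
  assumes "smooth_on S f" "x \<in> S"
  shows "f differentiable (at x)"
proof -
  obtain F where F: "\<forall>x\<in>S. F [] x = f x" "\<forall>vs. \<forall>x\<in>S. (F vs has_derivative (\<lambda>v. F (v # vs) x)) (at x)"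
    and S: "open S" using assms(1) unfolding smooth_on_def by blast
  have "(F [] has_derivative (\<lambda>v. F [v] x)) (at x)" using F(2) assms(2) by blast
  then have "(f has_derivative (\<lambda>v. F [v] x)) (at x)"
    by (rule has_derivative_transform_within_open[OF _ S assms(2)]) (use F(1) in auto)
  then show ?thesis unfolding differentiable_def by blast
qed

lemma linear_frechet_derivative: "f differentiable (at x) \<Longrightarrow> linear (frechet_derivative f (at x))"
  using frechet_derivative_works has_derivative_linear by blast

lemma has_vector_derivative_frechet_chain:
  assumes "f differentiable (at x)" "(c has_vector_derivative v) (at 0)" "c 0 = x"
  shows "((\<lambda>t. f (c t)) has_vector_derivative frechet_derivative f (at x) v) (at 0)"
proof -
  have "(f has_derivative frechet_derivative f (at x)) (at (c 0) within range c)"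
    using assms(1,3) frechet_derivative_works has_derivative_at_withinI by blast
  from vector_derivative_diff_chain_within[of c v 0 UNIV, OF _ this] assms(2)
  show ?thesis by (simp add: o_def)
qed

lemma has_vector_derivative_local:
  assumes "(f has_vector_derivative v) (at 0)" "\<epsilon> > 0" "\<forall>t. \<bar>t\<bar> < \<epsilon> \<longrightarrow> f t = g t"
  shows "(g has_vector_derivative v) (at (0::real))"
  by (rule has_vector_derivative_transform_within_open[OF assms(1), of "ball 0 \<epsilon>"])
     (use assms in \<open>auto simp: dist_real_def\<close>)

lemma has_vector_derivative_scaleR_const:
  "(f has_vector_derivative f') (at x) \<Longrightarrow> ((\<lambda>t. c *\<^sub>R f t) has_vector_derivative c *\<^sub>R f') (at x)"
  using has_vector_derivative_scaleR[of "\<lambda>_. c" 0 x UNIV f f'] by simp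

lemma frechet_derivative_pair_split:
  fixes L :: "'a::real_normed_vector \<times> 'b::real_normed_vector \<Rightarrow> 'c::real_normed_vector"
  assumes "L differentiable (at (x, y))"
  shows "(\<lambda>a. L (a, y)) differentiable (at x)" "(\<lambda>b. L (x, b)) differentiable (at y)"
    and "frechet_derivative L (at (x, y)) (u, v) =
           frechet_derivative (\<lambda>a. L (a, y)) (at x) u + frechet_derivative (\<lambda>b. L (x, b)) (at y) v"
proof -
  define M where "M = frechet_derivative L (at (x, y))"
  have D: "(L has_derivative M) (at (x, y))"
    unfolding M_def using assms frechet_derivative_works by blast
  have "((\<lambda>a. (a, y)) has_derivative (\<lambda>u. (u, 0))) (at x)"
    by (auto intro!: derivative_eq_intros)
  from has_derivative_compose[OF this D]
  have Dx: "((\<lambda>a. L (a, y)) has_derivative (\<lambda>u. M (u, 0))) (at x)" by simp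
  have "((\<lambda>b. (x, b)) has_derivative (\<lambda>v. (0, v))) (at y)"
    by (auto intro!: derivative_eq_intros)
  from has_derivative_compose[OF this D]
  have Dy: "((\<lambda>b. L (x, b)) has_derivative (\<lambda>v. M (0, v))) (at y)" by simp
  show "(\<lambda>a. L (a, y)) differentiable (at x)" "(\<lambda>b. L (x, b)) differentiable (at y)"
    using Dx Dy unfolding differentiable_def by blast+
  have "M (u, v) = M (u, 0) + M (0, v)"
    using linear_add[OF has_derivative_linear[OF D], of "(u, 0)" "(0, v)"] by simp
  then show "frechet_derivative L (at (x, y)) (u, v) =
           frechet_derivative (\<lambda>a. L (a, y)) (at x) u + frechet_derivative (\<lambda>b. L (x, b)) (at y) v"
    unfolding M_def frechet_derivative_at[OF Dx, symmetric] frechet_derivative_at[OF Dy, symmetric]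
    by (simp add: M_def)
qed

lemma frechet_derivative_triple_split:
  fixes L :: "'a::real_normed_vector \<times> 'b::real_normed_vector \<times> 'c::real_normed_vector \<Rightarrow> real"
  assumes "L differentiable (at (x, y, z))"
  shows "(\<lambda>a. L (a, y, z)) differentiable (at x)" "(\<lambda>b. L (x, b, z)) differentiable (at y)"
    "(\<lambda>c. L (x, y, c)) differentiable (at z)"
    and "frechet_derivative L (at (x, y, z)) (u, v, w) =
       frechet_derivative (\<lambda>a. L (a, y, z)) (at x) u + frechet_derivative (\<lambda>b. L (x, b, z)) (at y) v
       + frechet_derivative (\<lambda>c. L (x, y, c)) (at z) w"
  using frechet_derivative_pair_split[OF assms]
    frechet_derivative_pair_split[of "\<lambda>p. L (x, p)" y z, OF frechet_derivative_pair_split(2)[OF assms]]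
  by (simp_all add: add.assoc)

text \<open>Tangent spaces are closed under positive rescaling (reparametrize the curve).\<close>

lemma tangent_space_scaleR:
  assumes "v \<in> tangent_space G p" "r > 0"
  shows "r *\<^sub>R v \<in> tangent_space G p"
proof -
  obtain \<gamma> \<epsilon> where \<gamma>: "\<epsilon> > 0" "\<gamma> 0 = p" "\<forall>t. \<bar>t\<bar> < \<epsilon> \<longrightarrow> \<gamma> t \<in> G"
    "(\<gamma> has_vector_derivative v) (at 0)"
    using assms(1) unfolding tangent_space_def by blast
  have "((\<lambda>t. r * t) has_vector_derivative r) (at (0::real))"
    by (auto intro!: derivative_eq_intros)
  from vector_derivative_diff_chain_within[OF this, of \<gamma> "\<lambda>x. x *\<^sub>R v"] \<gamma>(4)
  have "((\<lambda>t. \<gamma> (r * t)) has_vector_derivative r *\<^sub>R v) (at 0)"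
    unfolding has_vector_derivative_def by (simp add: o_def has_derivative_at_withinI)
  moreover have "\<gamma> (r * t) \<in> G" if "\<bar>t\<bar> < \<epsilon> / r" for t
    using that \<gamma>(3) assms(2) by (simp add: abs_mult field_simps)
  ultimately show ?thesis unfolding tangent_space_def using \<gamma> assms(2)
    by (intro CollectI exI[of _ "\<lambda>t. \<gamma> (r * t)"] exI[of _ "\<epsilon> / r"]) auto
qed

locale embedded_lie_group =
  fixes G :: "'e::euclidean_space set" and m :: "'e \<Rightarrow> 'e \<Rightarrow> 'e" and iv :: "'e \<Rightarrow> 'e" and e :: 'e
  assumes lie: "lie_group G m iv e"
begin

lemma e_in [simp]: "e \<in> G"
  and m_in [simp]: "x \<in> G \<Longrightarrow> y \<in> G \<Longrightarrow> m x y \<in> G"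
  and iv_in [simp]: "x \<in> G \<Longrightarrow> iv x \<in> G"
  and assoc [simp]: "x \<in> G \<Longrightarrow> y \<in> G \<Longrightarrow> z \<in> G \<Longrightarrow> m (m x y) z = m x (m y z)"
  and left_id [simp]: "x \<in> G \<Longrightarrow> m e x = x"
  and right_id [simp]: "x \<in> G \<Longrightarrow> m x e = x"
  and left_inv [simp]: "x \<in> G \<Longrightarrow> m (iv x) x = e"
  and right_inv [simp]: "x \<in> G \<Longrightarrow> m x (iv x) = e"
  using lie unfolding lie_group_def by simp_all

lemma left_cancel [simp]: "x \<in> G \<Longrightarrow> y \<in> G \<Longrightarrow> m (iv x) (m x y) = y"
  by (metis assoc iv_in left_id left_inv)

lemma right_cancel [simp]: "x \<in> G \<Longrightarrow> y \<in> G \<Longrightarrow> m x (m (iv x) y) = y"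
  by (metis assoc iv_in left_id right_inv)

lemma mult_differentiable:
  assumes "x \<in> G" "y \<in> G"
  shows "(\<lambda>(x, y). m x y) differentiable (at (x, y))"
proof -
  obtain W where "G \<times> G \<subseteq> W" "smooth_on W (\<lambda>(x, y). m x y)"
    using lie unfolding lie_group_def by blast
  then show ?thesis using smooth_on_differentiable assms by blast
qed

lemma inv_differentiable:
  assumes "x \<in> G"
  shows "iv differentiable (at x)"
proof -
  obtain W where "G \<subseteq> W" "smooth_on W iv" using lie unfolding lie_group_def by blast
  then show ?thesis using smooth_on_differentiable assms by blast
qed

lemma left_mult_differentiable: "x \<in> G \<Longrightarrow> y \<in> G \<Longrightarrow> m x differentiable (at y)"
  using frechet_derivative_pair_split(2)[OF mult_differentiable] by simp

lemma right_mult_differentiable: "x \<in> G \<Longrightarrow> y \<in> G \<Longrightarrow> (\<lambda>z. m z y) differentiable (at x)"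
  using frechet_derivative_pair_split(1)[OF mult_differentiable] by simp

lemma product_rule:
  assumes "x \<in> G" "y \<in> G"
    and "(\<alpha> has_vector_derivative u) (at 0)" "\<alpha> 0 = x"
    and "(\<beta> has_vector_derivative v) (at 0)" "\<beta> 0 = y"
  shows "((\<lambda>t. m (\<alpha> t) (\<beta> t)) has_vector_derivative
           frechet_derivative (\<lambda>z. m z y) (at x) u + frechet_derivative (m x) (at y) v) (at 0)"
proof -
  have "((\<lambda>t. (\<alpha> t, \<beta> t)) has_vector_derivative (u, v)) (at 0)"
    using assms by (intro has_vector_derivative_Pair)
  from has_vector_derivative_frechet_chain[OF mult_differentiable[OF assms(1,2)] this]
  show ?thesis using assms frechet_derivative_pair_split(3)[OF mult_differentiable[OF assms(1,2)]]
    by simp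
qed

definition G_curve :: "(real \<Rightarrow> 'e) \<Rightarrow> 'e \<Rightarrow> 'e \<Rightarrow> bool" where
  "G_curve c x v \<longleftrightarrow> (\<exists>\<epsilon>>0. \<forall>t. \<bar>t\<bar> < \<epsilon> \<longrightarrow> c t \<in> G) \<and> c 0 = x \<and> (c has_vector_derivative v) (at 0)"

lemma tangent_space_iff_G_curve: "v \<in> tangent_space G x \<longleftrightarrow> (\<exists>c. G_curve c x v)"
  unfolding G_curve_def tangent_space_def by blast

lemma G_curve_in: "G_curve c x v \<Longrightarrow> x \<in> G"
  unfolding G_curve_def by force

lemma G_curve_velocity_eq:
  assumes "G_curve c x v" "((\<lambda>t. f (c t)) has_vector_derivative w) (at 0)"
    and "\<And>y. y \<in> G \<Longrightarrow> f y = y"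
  shows "w = v"
proof -
  obtain \<epsilon> where c: "\<epsilon> > 0" "\<forall>t. \<bar>t\<bar> < \<epsilon> \<longrightarrow> c t \<in> G" "(c has_vector_derivative v) (at 0)"
    using assms(1) unfolding G_curve_def by blast
  have "(c has_vector_derivative w) (at 0)"
    by (rule has_vector_derivative_local[OF assms(2) c(1)]) (use c(2) assms(3) in auto)
  then show ?thesis using c(3) vector_derivative_unique_at by blast
qed

lemma G_curve_map:
  assumes "G_curve c x v" "f differentiable (at x)" "\<And>y. y \<in> G \<Longrightarrow> f y \<in> G"
  shows "G_curve (\<lambda>t. f (c t)) (f x) (frechet_derivative f (at x) v)"
  using assms has_vector_derivative_frechet_chain[OF assms(2)] unfolding G_curve_def by blast

text \<open>Translation by e is the identity on G, so its derivative fixes the Lie algebra.\<close>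

lemma identity_derivatives:
  assumes c: "G_curve c e v"
  shows "frechet_derivative (\<lambda>z. m z e) (at e) v = v" "frechet_derivative (m e) (at e) v = v"
proof -
  have "((\<lambda>t. m (c t) e) has_vector_derivative frechet_derivative (\<lambda>z. m z e) (at e) v) (at 0)"
    using has_vector_derivative_frechet_chain[OF right_mult_differentiable[OF e_in e_in]] c
    unfolding G_curve_def by blast
  then show "frechet_derivative (\<lambda>z. m z e) (at e) v = v"
    by (rule G_curve_velocity_eq[OF c]) simp
  have "((\<lambda>t. m e (c t)) has_vector_derivative frechet_derivative (m e) (at e) v) (at 0)"
    using has_vector_derivative_frechet_chain[OF left_mult_differentiable[OF e_in e_in]] c
    unfolding G_curve_def by blast
  then show "frechet_derivative (m e) (at e) v = v"
    by (rule G_curve_velocity_eq[OF c]) simp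
qed

definition trivialize :: "'e \<Rightarrow> 'e \<Rightarrow> 'e" where
  "trivialize g w = frechet_derivative (m (iv g)) (at g) w"

lemma G_curve_trivialize:
  assumes "G_curve \<gamma> g w"
  shows "G_curve (\<lambda>t. m (iv g) (\<gamma> t)) e (trivialize g w)" "w = dLeft m e g (trivialize g w)"
proof -
  have g: "g \<in> G" using G_curve_in[OF assms] .
  show c: "G_curve (\<lambda>t. m (iv g) (\<gamma> t)) e (trivialize g w)"
    using G_curve_map[OF assms left_mult_differentiable[OF iv_in[OF g] g]] g
    unfolding trivialize_def by simp
  have "((\<lambda>t. m g (m (iv g) (\<gamma> t))) has_vector_derivative dLeft m e g (trivialize g w)) (at 0)"
    using has_vector_derivative_frechet_chain[OF left_mult_differentiable[OF g e_in]] c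
    unfolding dLeft_def G_curve_def by blast
  then have "dLeft m e g (trivialize g w) = w"
    by (rule G_curve_velocity_eq[OF assms]) (simp add: g)
  then show "w = dLeft m e g (trivialize g w)" ..
qed

lemma G_curve_left:
  assumes "x \<in> G" "G_curve c e v"
  shows "G_curve (\<lambda>t. m x (c t)) x (dLeft m e x v)"
  using G_curve_map[OF assms(2) left_mult_differentiable[OF assms(1) e_in]] assms(1)
  unfolding dLeft_def by simp

lemma trivialize_left:
  assumes "g \<in> G" "G_curve c e \<zeta>"
  shows "trivialize g (dLeft m e g \<zeta>) = \<zeta>"
proof -
  have "G_curve (\<lambda>t. m (iv g) (m g (c t))) e (trivialize g (dLeft m e g \<zeta>))"
    using G_curve_trivialize(1)[OF G_curve_left[OF assms]] .
  then show ?thesis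
    by (intro G_curve_velocity_eq[OF assms(2), of "\<lambda>y. m (iv g) (m g y)"])
       (auto simp: G_curve_def assms(1))
qed

lemma trivialize_zero: "g \<in> G \<Longrightarrow> trivialize g 0 = 0"
  unfolding trivialize_def
  using linear_0[OF linear_frechet_derivative[OF left_mult_differentiable[OF iv_in]]] by blast

lemma conjugation_differentiable: "h \<in> G \<Longrightarrow> (\<lambda>x. m (m h x) (iv h)) differentiable (at e)"
  using differentiable_chain_at[OF left_mult_differentiable[OF _ e_in] right_mult_differentiable, of h]
  by (simp add: o_def)

lemma G_curve_conjugate:
  assumes "h \<in> G" "G_curve b e v"
  shows "G_curve (\<lambda>t. m (m h (b t)) (iv h)) e (Ad m iv e h v)"
  using G_curve_map[OF assms(2) conjugation_differentiable[OF assms(1)]] assms(1)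
  unfolding Ad_def by simp

lemma G_curve_inverse:
  assumes "G_curve \<gamma> g w"
  shows "G_curve (\<lambda>t. m (iv (\<gamma> t)) g) e (- trivialize g w)"
proof -
  have g: "g \<in> G" using G_curve_in[OF assms] .
  have "(\<lambda>x. m (iv x) g) differentiable (at g)"
    using differentiable_chain_at[OF inv_differentiable[OF g] right_mult_differentiable[OF _ g]] g
    by (simp add: o_def)
  from G_curve_map[OF assms this]
  have inv: "G_curve (\<lambda>t. m (iv (\<gamma> t)) g) e (frechet_derivative (\<lambda>x. m (iv x) g) (at g) w)"
    (is "G_curve _ e ?a") using g by simp
  have triv: "G_curve (\<lambda>t. m (iv g) (\<gamma> t)) e (trivialize g w)"
    using G_curve_trivialize(1)[OF assms] .
  have "((\<lambda>t. m (m (iv (\<gamma> t)) g) (m (iv g) (\<gamma> t))) has_vector_derivative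
      frechet_derivative (\<lambda>z. m z e) (at e) ?a + frechet_derivative (m e) (at e) (trivialize g w)) (at 0)"
    by (rule product_rule) (use inv triv in \<open>auto simp: G_curve_def\<close>)
  then have D: "((\<lambda>t. m (m (iv (\<gamma> t)) g) (m (iv g) (\<gamma> t))) has_vector_derivative
      ?a + trivialize g w) (at 0)"
    using identity_derivatives inv triv by simp
  obtain \<epsilon> where "\<epsilon> > 0" "\<forall>t. \<bar>t\<bar> < \<epsilon> \<longrightarrow> \<gamma> t \<in> G"
    using assms unfolding G_curve_def by blast
  then have "((\<lambda>t. e) has_vector_derivative ?a + trivialize g w) (at 0)"
    using has_vector_derivative_local[OF D] g by auto
  then have "?a + trivialize g w = 0"
    using has_vector_derivative_const vector_derivative_unique_at by blast
  then have "?a = - trivialize g w" by (simp add: eq_neg_iff_add_eq_0)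
  then show ?thesis using inv by simp
qed

lemma relative_displacement_derivative:
  assumes "G_curve \<gamma> g w" "G_curve \<gamma>' g' w'"
  shows "((\<lambda>t. m (iv (\<gamma> t)) (\<gamma>' t)) has_vector_derivative
           dRight m e (m (iv g) g') (Ad m iv e (m (iv g) g') (trivialize g' w') - trivialize g w)) (at 0)"
proof -
  have g: "g \<in> G" and g': "g' \<in> G" using assms G_curve_in by auto
  define h where "h = m (iv g) g'"
  have h: "h \<in> G" unfolding h_def using g g' by simp
  have inv: "G_curve (\<lambda>t. m (iv (\<gamma> t)) g) e (- trivialize g w)"
    using G_curve_inverse[OF assms(1)] .
  have conj: "G_curve (\<lambda>t. m (m h (m (iv g') (\<gamma>' t))) (iv h)) e (Ad m iv e h (trivialize g' w'))"
    using G_curve_conjugate[OF h G_curve_trivialize(1)[OF assms(2)]] .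
  have "((\<lambda>t. m (m (iv (\<gamma> t)) g) (m (m h (m (iv g') (\<gamma>' t))) (iv h))) has_vector_derivative
      frechet_derivative (\<lambda>z. m z e) (at e) (- trivialize g w)
      + frechet_derivative (m e) (at e) (Ad m iv e h (trivialize g' w'))) (at 0)"
    by (rule product_rule) (use inv conj in \<open>auto simp: G_curve_def\<close>)
  then have "((\<lambda>t. m (m (iv (\<gamma> t)) g) (m (m h (m (iv g') (\<gamma>' t))) (iv h))) has_vector_derivative
      Ad m iv e h (trivialize g' w') - trivialize g w) (at 0)"
    using identity_derivatives inv conj by simp
  from has_vector_derivative_frechet_chain[OF right_mult_differentiable[OF e_in h] this]
  have D: "((\<lambda>t. m (m (m (iv (\<gamma> t)) g) (m (m h (m (iv g') (\<gamma>' t))) (iv h))) h)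
      has_vector_derivative dRight m e h (Ad m iv e h (trivialize g' w') - trivialize g w)) (at 0)"
    unfolding dRight_def using g g' h assms by (simp add: G_curve_def)
  obtain \<epsilon> where "\<epsilon> > 0" "\<forall>t. \<bar>t\<bar> < \<epsilon> \<longrightarrow> \<gamma> t \<in> G \<and> \<gamma>' t \<in> G"
    using assms unfolding G_curve_def by (metis abs_ge_zero le_less_trans min_less_iff_conj)
  then show ?thesis
    using has_vector_derivative_local[OF D] g g' unfolding h_def by auto
qed

lemma linear_dRight: "h \<in> G \<Longrightarrow> linear (dRight m e h)"
  unfolding dRight_def[abs_def]
  using linear_frechet_derivative[OF right_mult_differentiable[OF e_in]] by simp

lemma linear_dLeft: "g \<in> G \<Longrightarrow> linear (dLeft m e g)"
  unfolding dLeft_def[abs_def]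
  using linear_frechet_derivative[OF left_mult_differentiable[OF _ e_in]] by simp

lemma linear_Ad: "h \<in> G \<Longrightarrow> linear (Ad m iv e h)"
  unfolding Ad_def[abs_def] using linear_frechet_derivative[OF conjugation_differentiable] by simp

end

lemma Adstar_pairing:
  assumes "linear \<mu>"
  shows "\<mu> (Ad m iv e h \<zeta>' - \<zeta>) = Adstar m iv e h \<mu> \<zeta>' - \<mu> \<zeta>"
  unfolding Adstar_def using linear_diff[OF assms] by simp

locale discrete_field = embedded_lie_group G m iv e
  for G :: "'e::euclidean_space set" and m iv e +
  fixes \<tau> \<tau>inv :: "'e \<Rightarrow> 'e" and U V :: "'e set"
    and Ld :: "nat \<Rightarrow> nat \<Rightarrow> 'e \<Rightarrow> 'e \<Rightarrow> 'e \<Rightarrow> real"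
    and dt ds :: real and N A :: nat
    and gd :: "nat \<Rightarrow> nat \<Rightarrow> 'e"
  assumes chart: "tau_chart G e \<tau> \<tau>inv U V"
    and dt: "dt > 0" and ds: "ds > 0"
    and Ld_smooth: "\<forall>j<N. \<forall>a<A. \<exists>W. G \<times> lie_alg G e \<times> lie_alg G e \<subseteq> W \<and>
                         smooth_on W (\<lambda>(x, y, z). Ld j a x y z)"
    and gd_in_G: "\<forall>j\<le>N. \<forall>a\<le>A. gd j a \<in> G"
    and gd_steps_in_V: "\<forall>j<N. \<forall>a<A. m (iv (gd j a)) (gd (Suc j) a) \<in> V \<and> m (iv (gd j a)) (gd j (Suc a)) \<in> V"
begin

abbreviation "XI \<equiv> dxi m iv \<tau>inv dt"
abbreviation "ETA \<equiv> deta m iv \<tau>inv ds"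
abbreviation "MU \<equiv> dmu m iv e \<tau> \<tau>inv Ld dt ds gd"
abbreviation "LAM \<equiv> dlam m iv e \<tau> \<tau>inv Ld dt ds gd"
abbreviation "DG \<equiv> dDgL m iv e \<tau>inv Ld dt ds gd"

lemma gd_in [simp]: "j \<le> N \<Longrightarrow> a \<le> A \<Longrightarrow> gd j a \<in> G"
  using gd_in_G by blast

lemma tauinv_differentiable: "h \<in> V \<Longrightarrow> \<tau>inv differentiable (at h)"
  using chart smooth_on_differentiable unfolding tau_chart_def by blast

lemma tauinv_inverse: "h \<in> G \<Longrightarrow> h \<in> V \<Longrightarrow> \<tau>inv h \<in> lie_alg G e \<and> \<tau> (\<tau>inv h) = h"
  using chart unfolding tau_chart_def by blast

lemma xi_props:
  assumes "j < N" "a < A"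
  shows "XI gd j a \<in> lie_alg G e" "\<tau> (dt *\<^sub>R XI gd j a) = m (iv (gd j a)) (gd (Suc j) a)"
proof -
  let ?h = "m (iv (gd j a)) (gd (Suc j) a)"
  have h: "\<tau>inv ?h \<in> lie_alg G e" "\<tau> (\<tau>inv ?h) = ?h"
    using tauinv_inverse assms gd_steps_in_V by auto
  then show "XI gd j a \<in> lie_alg G e"
    unfolding dxi_def lie_alg_def using tangent_space_scaleR[of _ G e "1/dt"] dt by simp
  show "\<tau> (dt *\<^sub>R XI gd j a) = ?h" unfolding dxi_def using dt h by simp
qed

lemma eta_props:
  assumes "j < N" "a < A"
  shows "ETA gd j a \<in> lie_alg G e" "\<tau> (ds *\<^sub>R ETA gd j a) = m (iv (gd j a)) (gd j (Suc a))"
proof -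
  let ?h = "m (iv (gd j a)) (gd j (Suc a))"
  have h: "\<tau>inv ?h \<in> lie_alg G e" "\<tau> (\<tau>inv ?h) = ?h"
    using tauinv_inverse assms gd_steps_in_V by auto
  then show "ETA gd j a \<in> lie_alg G e"
    unfolding deta_def lie_alg_def using tangent_space_scaleR[of _ G e "1/ds"] ds by simp
  show "\<tau> (ds *\<^sub>R ETA gd j a) = ?h" unfolding deta_def using ds h by simp
qed

lemma Ld_differentiable:
  assumes "j < N" "a < A"
  shows "(\<lambda>(x, y, z). Ld j a x y z) differentiable (at (gd j a, XI gd j a, ETA gd j a))"
proof -
  obtain W where "G \<times> lie_alg G e \<times> lie_alg G e \<subseteq> W" "smooth_on W (\<lambda>(x, y, z). Ld j a x y z)"
    using Ld_smooth assms by blast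
  moreover have "(gd j a, XI gd j a, ETA gd j a) \<in> G \<times> lie_alg G e \<times> lie_alg G e"
    using xi_props eta_props assms by auto
  ultimately show ?thesis using smooth_on_differentiable by blast
qed

lemma linear_MU: assumes "j < N" "a < A" shows "linear (MU j a)"
proof -
  let ?h = "m (iv (gd j a)) (gd (Suc j) a)"
  have "MU j a = frechet_derivative (\<lambda>y. Ld j a (gd j a) y (ETA gd j a)) (at (XI gd j a))
      \<circ> frechet_derivative \<tau>inv (at ?h) \<circ> dRight m e ?h"
    unfolding dmu_def dRtauinv_def xi_props(2)[OF assms] by (simp add: o_def)
  then show ?thesis
    using frechet_derivative_triple_split(2)[OF Ld_differentiable[OF assms]] assms gd_steps_in_V
    by (simp add: linear_compose linear_frechet_derivative tauinv_differentiable linear_dRight)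
qed

lemma linear_LAM: assumes "j < N" "a < A" shows "linear (LAM j a)"
proof -
  let ?h = "m (iv (gd j a)) (gd j (Suc a))"
  have "LAM j a = frechet_derivative (\<lambda>z. Ld j a (gd j a) (XI gd j a) z) (at (ETA gd j a))
      \<circ> frechet_derivative \<tau>inv (at ?h) \<circ> dRight m e ?h"
    unfolding dlam_def dRtauinv_def eta_props(2)[OF assms] by (simp add: o_def)
  then show ?thesis
    using frechet_derivative_triple_split(3)[OF Ld_differentiable[OF assms]] assms gd_steps_in_V
    by (simp add: linear_compose linear_frechet_derivative tauinv_differentiable linear_dRight)
qed

lemma linear_DG: assumes "j < N" "a < A" shows "linear (DG j a)"
proof -
  have "DG j a = frechet_derivative (\<lambda>x. Ld j a x (XI gd j a) (ETA gd j a)) (at (gd j a))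
      \<circ> dLeft m e (gd j a)"
    unfolding dDgL_def by (simp add: o_def)
  then show ?thesis
    using frechet_derivative_triple_split(1)[OF Ld_differentiable[OF assms]] assms
    by (simp add: linear_compose linear_frechet_derivative linear_dLeft)
qed

lemma discrete_velocity_derivative:
  assumes "G_curve \<gamma> g w" "G_curve \<gamma>' g' w'" "m (iv g) g' \<in> V"
  shows "((\<lambda>t. c *\<^sub>R \<tau>inv (m (iv (\<gamma> t)) (\<gamma>' t))) has_vector_derivative
           c *\<^sub>R frechet_derivative \<tau>inv (at (m (iv g) g'))
             (dRight m e (m (iv g) g') (Ad m iv e (m (iv g) g') (trivialize g' w') - trivialize g w))) (at 0)"
  using has_vector_derivative_scaleR_const[OF has_vector_derivative_frechet_chain[OF
      tauinv_differentiable[OF assms(3)] relative_displacement_derivative[OF assms(1,2)]]] assms(1,2)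
  unfolding G_curve_def by simp

lemma xi_derivative:
  assumes "j < N" "a < A"
    and "G_curve (\<lambda>t. \<gamma> t j a) (gd j a) w" "G_curve (\<lambda>t. \<gamma> t (Suc j) a) (gd (Suc j) a) w'"
  shows "((\<lambda>t. XI (\<gamma> t) j a) has_vector_derivative (1/dt) *\<^sub>R dRtauinv m e \<tau> \<tau>inv (dt *\<^sub>R XI gd j a)
           (Ad m iv e (\<tau> (dt *\<^sub>R XI gd j a)) (trivialize (gd (Suc j) a) w') - trivialize (gd j a) w)) (at 0)"
  using discrete_velocity_derivative[OF assms(3,4), of "1/dt"] gd_steps_in_V assms(1,2)
  unfolding dRtauinv_def xi_props(2)[OF assms(1,2)] by (simp add: dxi_def)

lemma eta_derivative:
  assumes "j < N" "a < A"
    and "G_curve (\<lambda>t. \<gamma> t j a) (gd j a) w" "G_curve (\<lambda>t. \<gamma> t j (Suc a)) (gd j (Suc a)) w'"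
  shows "((\<lambda>t. ETA (\<gamma> t) j a) has_vector_derivative (1/ds) *\<^sub>R dRtauinv m e \<tau> \<tau>inv (ds *\<^sub>R ETA gd j a)
           (Ad m iv e (\<tau> (ds *\<^sub>R ETA gd j a)) (trivialize (gd j (Suc a)) w') - trivialize (gd j a) w)) (at 0)"
  using discrete_velocity_derivative[OF assms(3,4), of "1/ds"] gd_steps_in_V assms(1,2)
  unfolding dRtauinv_def eta_props(2)[OF assms(1,2)] by (simp add: deta_def)

end

lemma sum_atMost_if_less: "(\<Sum>j\<le>(N::nat). if j < N then f j else 0) = (\<Sum>j<N. f j :: real)"
proof -
  have "{..N} \<inter> {j. j < N} = {..<N}" by auto
  then show ?thesis by (simp add: sum.If_cases)
qed

lemma sum_atMost_if_pos: "(\<Sum>j\<le>(N::nat). if 0 < j then f j else 0) = (\<Sum>j<N. f (Suc j) :: real)"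
  by (induct N) auto

lemma sum_if_const_cond: "(\<Sum>a\<in>S. if P then f a else 0) = (if P then \<Sum>a\<in>S. f a else (0::real))"
  by auto

text \<open>Summation by parts on the grid: a sum over triangles of terms living at the three vertices
  (j, a), (j+1, a), (j, a+1) is regrouped as a sum over nodes.\<close>

lemma sum_triangles_by_nodes:
  fixes X :: "nat \<Rightarrow> nat \<Rightarrow> real" and Y W :: "nat \<Rightarrow> nat \<Rightarrow> 'a \<Rightarrow> real" and Z :: "nat \<Rightarrow> nat \<Rightarrow> 'a"
  shows "(\<Sum>j<N. \<Sum>a<A. X j a + Y j a (Z (Suc j) a) + W j a (Z j (Suc a))) =
    (\<Sum>j\<le>N. \<Sum>a\<le>A. (if j < N then if a < A then X j a else 0 else 0)
        + (if 0 < j then if a < A then Y (j - 1) a (Z j a) else 0 else 0)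
        + (if j < N then if 0 < a then W j (a - 1) (Z j a) else 0 else 0))"
  by (simp add: sum.distrib sum_if_const_cond sum_atMost_if_less sum_atMost_if_pos)

lemma interior_index_iff: "j \<in> {1..N-1} \<longleftrightarrow> j \<le> N \<and> j \<noteq> 0 \<and> j \<noteq> (N::nat)"
  by auto

lemma free_nodes_fixed_boundary:
  "(\<forall>j\<le>(N::nat). \<forall>a\<le>(A::nat). \<not> (j = 0 \<or> j = N \<or> a = 0 \<or> a = A) \<longrightarrow> P j a)
     \<longleftrightarrow> (\<forall>j\<in>{1..N-1}. \<forall>a\<in>{1..A-1}. P j a)"
  unfolding Ball_def interior_index_iff by blast

lemma boundary_cases: "(a::nat) \<le> A \<Longrightarrow> a = 0 \<or> a = A \<or> a \<in> {1..A-1}"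
  by auto

lemma free_nodes_fixed_j_ends:
  "(\<forall>j\<le>(N::nat). \<forall>a\<le>(A::nat). \<not> (j = 0 \<or> j = N) \<longrightarrow> P j a)
     \<longleftrightarrow> (\<forall>j\<in>{1..N-1}. \<forall>a\<in>{1..A-1}. P j a) \<and> (\<forall>j\<in>{1..N-1}. P j 0 \<and> P j A)"
  using boundary_cases[of _ A] unfolding Ball_def interior_index_iff by blast

lemma free_nodes_fixed_a_ends:
  "(\<forall>j\<le>(N::nat). \<forall>a\<le>(A::nat). \<not> (a = 0 \<or> a = A) \<longrightarrow> P j a)
     \<longleftrightarrow> (\<forall>j\<in>{1..N-1}. \<forall>a\<in>{1..A-1}. P j a) \<and> (\<forall>a\<in>{1..A-1}. P 0 a \<and> P N a)"
  using boundary_cases[of _ N] unfolding Ball_def interior_index_iff by blast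

context discrete_field
begin

abbreviation "tau_xi j a \<equiv> \<tau> (dt *\<^sub>R XI gd j a)"
abbreviation "tau_eta j a \<equiv> \<tau> (ds *\<^sub>R ETA gd j a)"

lemma triangle_variation:
  assumes ja: "j < N" "a < A"
    and c0: "G_curve (\<lambda>t. \<gamma> t j a) (gd j a) w"
    and c1: "G_curve (\<lambda>t. \<gamma> t (Suc j) a) (gd (Suc j) a) w1"
    and c2: "G_curve (\<lambda>t. \<gamma> t j (Suc a)) (gd j (Suc a)) w2"
  shows "((\<lambda>t. Ld j a (\<gamma> t j a) (XI (\<gamma> t) j a) (ETA (\<gamma> t) j a)) has_vector_derivative
     DG j a (trivialize (gd j a) w)
     + (1/dt) * (Adstar m iv e (tau_xi j a) (MU j a) (trivialize (gd (Suc j) a) w1) - MU j a (trivialize (gd j a) w))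
     + (1/ds) * (Adstar m iv e (tau_eta j a) (LAM j a) (trivialize (gd j (Suc a)) w2) - LAM j a (trivialize (gd j a) w))) (at 0)"
proof -
  let ?p = "(gd j a, XI gd j a, ETA gd j a)"
  let ?vx = "(1/dt) *\<^sub>R dRtauinv m e \<tau> \<tau>inv (dt *\<^sub>R XI gd j a)
    (Ad m iv e (tau_xi j a) (trivialize (gd (Suc j) a) w1) - trivialize (gd j a) w)"
  let ?ve = "(1/ds) *\<^sub>R dRtauinv m e \<tau> \<tau>inv (ds *\<^sub>R ETA gd j a)
    (Ad m iv e (tau_eta j a) (trivialize (gd j (Suc a)) w2) - trivialize (gd j a) w)"
  have L: "(\<lambda>(x, y, z). Ld j a x y z) differentiable (at ?p)" using Ld_differentiable[OF ja] .
  have "((\<lambda>t. (\<gamma> t j a, XI (\<gamma> t) j a, ETA (\<gamma> t) j a)) has_vector_derivative (w, ?vx, ?ve)) (at 0)"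
    using xi_derivative[where \<gamma> = \<gamma>, OF ja c0 c1] eta_derivative[where \<gamma> = \<gamma>, OF ja c0 c2] c0 unfolding G_curve_def
    by (intro has_vector_derivative_Pair) auto
  moreover have "(\<gamma> 0 j a, XI (\<gamma> 0) j a, ETA (\<gamma> 0) j a) = ?p"
    using c0 c1 c2 unfolding G_curve_def dxi_def deta_def by simp
  ultimately have "((\<lambda>t. Ld j a (\<gamma> t j a) (XI (\<gamma> t) j a) (ETA (\<gamma> t) j a)) has_vector_derivative
      frechet_derivative (\<lambda>x. Ld j a x (XI gd j a) (ETA gd j a)) (at (gd j a)) w
    + frechet_derivative (\<lambda>y. Ld j a (gd j a) y (ETA gd j a)) (at (XI gd j a)) ?vx
    + frechet_derivative (\<lambda>z. Ld j a (gd j a) (XI gd j a) z) (at (ETA gd j a)) ?ve) (at 0)"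
    using has_vector_derivative_frechet_chain[OF L] frechet_derivative_triple_split(4)[OF L]
    by fastforce
  moreover have "frechet_derivative (\<lambda>x. Ld j a x (XI gd j a) (ETA gd j a)) (at (gd j a)) w
      = DG j a (trivialize (gd j a) w)"
    unfolding dDgL_def using G_curve_trivialize(2)[OF c0] by simp
  moreover have "frechet_derivative (\<lambda>y. Ld j a (gd j a) y (ETA gd j a)) (at (XI gd j a)) ?vx
      = (1/dt) * MU j a (Ad m iv e (tau_xi j a) (trivialize (gd (Suc j) a) w1) - trivialize (gd j a) w)"
    unfolding dmu_def using linear_scale[OF linear_frechet_derivative[OF
        frechet_derivative_triple_split(2)[OF L]]] by simp
  moreover have "frechet_derivative (\<lambda>z. Ld j a (gd j a) (XI gd j a) z) (at (ETA gd j a)) ?ve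
      = (1/ds) * LAM j a (Ad m iv e (tau_eta j a) (trivialize (gd j (Suc a)) w2) - trivialize (gd j a) w)"
    unfolding dlam_def using linear_scale[OF linear_frechet_derivative[OF
        frechet_derivative_triple_split(3)[OF L]]] by simp
  ultimately show ?thesis
    by (simp add: Adstar_pairing linear_MU[OF ja] linear_LAM[OF ja])
qed

text \<open>The discrete Euler--Lagrange expression at node (j, a): the coefficient of the trivialized
  variation at that node in the first variation of the action.  Each term is present only if
  the corresponding neighbouring triangle exists.\<close>

definition nodal_EL :: "nat \<Rightarrow> nat \<Rightarrow> 'e \<Rightarrow> real" where
  "nodal_EL j a \<zeta> =
       (if j < N then if a < A then DG j a \<zeta> - (1/dt) * MU j a \<zeta> - (1/ds) * LAM j a \<zeta> else 0 else 0)
     + (if 0 < j then if a < A then (1/dt) * Adstar m iv e (tau_xi (j - 1) a) (MU (j - 1) a) \<zeta> else 0 else 0)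
     + (if j < N then if 0 < a then (1/ds) * Adstar m iv e (tau_eta j (a - 1)) (LAM j (a - 1)) \<zeta> else 0 else 0)"

lemma action_variation:
  assumes "\<forall>j\<le>N. \<forall>a\<le>A. G_curve (\<lambda>t. \<gamma> t j a) (gd j a) (dg j a)"
  shows "((\<lambda>t. action m iv \<tau>inv Ld dt ds N A (\<gamma> t)) has_real_derivative
           (\<Sum>j\<le>N. \<Sum>a\<le>A. nodal_EL j a (trivialize (gd j a) (dg j a)))) (at 0)"
proof -
  let ?Z = "\<lambda>j a. trivialize (gd j a) (dg j a)"
  have "((\<lambda>t. \<Sum>j<N. \<Sum>a<A. Ld j a (\<gamma> t j a) (XI (\<gamma> t) j a) (ETA (\<gamma> t) j a)) has_vector_derivative
      (\<Sum>j<N. \<Sum>a<A. (DG j a (?Z j a) - (1/dt) * MU j a (?Z j a) - (1/ds) * LAM j a (?Z j a))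
        + (1/dt) * Adstar m iv e (tau_xi j a) (MU j a) (?Z (Suc j) a)
        + (1/ds) * Adstar m iv e (tau_eta j a) (LAM j a) (?Z j (Suc a)))) (at 0)"
    using triangle_variation assms
    by (intro has_vector_derivative_sum) (auto simp: algebra_simps)
  also have "(\<Sum>j<N. \<Sum>a<A. (DG j a (?Z j a) - (1/dt) * MU j a (?Z j a) - (1/ds) * LAM j a (?Z j a))
        + (1/dt) * Adstar m iv e (tau_xi j a) (MU j a) (?Z (Suc j) a)
        + (1/ds) * Adstar m iv e (tau_eta j a) (LAM j a) (?Z j (Suc a)))
      = (\<Sum>j\<le>N. \<Sum>a\<le>A. nodal_EL j a (?Z j a))"
    unfolding nodal_EL_def
    by (rule sum_triangles_by_nodes[where
          X = "\<lambda>j a. DG j a (?Z j a) - (1/dt) * MU j a (?Z j a) - (1/ds) * LAM j a (?Z j a)"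
      and Y = "\<lambda>j a \<zeta>. (1/dt) * Adstar m iv e (tau_xi j a) (MU j a) \<zeta>"
      and W = "\<lambda>j a \<zeta>. (1/ds) * Adstar m iv e (tau_eta j a) (LAM j a) \<zeta>" and Z = ?Z])
  finally show ?thesis
    unfolding has_real_derivative_iff_has_vector_derivative action_def .
qed

lemma nodal_EL_zero: assumes "j \<le> N" "a \<le> A" shows "nodal_EL j a 0 = 0"
proof -
  have "Adstar m iv e (tau_xi (j - 1) a) (MU (j - 1) a) 0 = 0" if "0 < j" "a < A"
  proof -
    have j: "j - 1 < N" using that assms by auto
    then have "tau_xi (j - 1) a \<in> G" using xi_props(2)[OF j that(2)] that by simp
    then show ?thesis
      unfolding Adstar_def using linear_0[OF linear_Ad] linear_0[OF linear_MU[OF j that(2)]] by simp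
  qed
  moreover have "Adstar m iv e (tau_eta j (a - 1)) (LAM j (a - 1)) 0 = 0" if "0 < a" "j < N"
  proof -
    have a: "a - 1 < A" using that assms by auto
    then have "tau_eta j (a - 1) \<in> G" using eta_props(2)[OF that(2) a] that by simp
    then show ?thesis
      unfolding Adstar_def using linear_0[OF linear_Ad] linear_0[OF linear_LAM[OF that(2) a]] by simp
  qed
  moreover have "DG j a 0 = 0" "MU j a 0 = 0" "LAM j a 0 = 0" if "j < N" "a < A"
    using linear_0[OF linear_DG[OF that]] linear_0[OF linear_MU[OF that]]
      linear_0[OF linear_LAM[OF that]] by auto
  ultimately show ?thesis unfolding nodal_EL_def using assms by auto
qed


lemma stationary_if_nodal_EL:
  assumes "\<forall>j\<le>N. \<forall>a\<le>A. \<not> fixed j a \<longrightarrow> (\<forall>\<zeta>\<in>lie_alg G e. nodal_EL j a \<zeta> = 0)"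
  shows "stationary G (action m iv \<tau>inv Ld dt ds N A) N A fixed gd"
  unfolding stationary_def
proof (intro allI impI, elim conjE)
  fix dg and \<gamma> :: "real \<Rightarrow> nat \<Rightarrow> nat \<Rightarrow> 'e"
  assume fixed: "\<forall>j\<le>N. \<forall>a\<le>A. fixed j a \<longrightarrow> dg j a = 0"
    and near: "\<exists>\<epsilon>>0. \<forall>t. \<bar>t\<bar> < \<epsilon> \<longrightarrow> (\<forall>j\<le>N. \<forall>a\<le>A. \<gamma> t j a \<in> G)"
    and init: "\<forall>j\<le>N. \<forall>a\<le>A. \<gamma> 0 j a = gd j a \<and> ((\<lambda>t. \<gamma> t j a) has_vector_derivative dg j a) (at 0)"
  have curves: "\<forall>j\<le>N. \<forall>a\<le>A. G_curve (\<lambda>t. \<gamma> t j a) (gd j a) (dg j a)"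
    unfolding G_curve_def using near init by blast
  have "nodal_EL j a (trivialize (gd j a) (dg j a)) = 0" if "j \<le> N" "a \<le> A" for j a
  proof (cases "fixed j a")
    case True
    then show ?thesis using fixed that trivialize_zero nodal_EL_zero by simp
  next
    case False
    have "trivialize (gd j a) (dg j a) \<in> lie_alg G e"
      unfolding lie_alg_def tangent_space_iff_G_curve using G_curve_trivialize(1) curves that by blast
    then show ?thesis using assms False that by blast
  qed
  then have "(\<Sum>j\<le>N. \<Sum>a\<le>A. nodal_EL j a (trivialize (gd j a) (dg j a))) = 0" by simp
  then show "((\<lambda>t. action m iv \<tau>inv Ld dt ds N A (\<gamma> t)) has_real_derivative 0) (at 0)"
    using action_variation[OF curves] by simp
qed

text \<open>Conversely, test stationarity with a variation concentrated at one free node, obtained by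
  left-translating a curve through e with a given Lie algebra velocity.\<close>

lemma nodal_EL_if_stationary:
  assumes stat: "stationary G (action m iv \<tau>inv Ld dt ds N A) N A fixed gd"
    and node: "j0 \<le> N" "a0 \<le> A" "\<not> fixed j0 a0" and \<zeta>: "\<zeta> \<in> lie_alg G e"
  shows "nodal_EL j0 a0 \<zeta> = 0"
proof -
  obtain c where c: "G_curve c e \<zeta>" using \<zeta> unfolding lie_alg_def tangent_space_iff_G_curve by blast
  then obtain \<epsilon> where \<epsilon>: "\<epsilon> > 0" "\<forall>t. \<bar>t\<bar> < \<epsilon> \<longrightarrow> c t \<in> G" unfolding G_curve_def by blast
  define \<gamma> where "\<gamma> t j a = (if j = j0 \<and> a = a0 then m (gd j0 a0) (c t) else gd j a)" for t j a
  define dg where "dg j a = (if j = j0 \<and> a = a0 then dLeft m e (gd j0 a0) \<zeta> else 0)" for j a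
  have curves: "G_curve (\<lambda>t. \<gamma> t j a) (gd j a) (dg j a)" if "j \<le> N" "a \<le> A" for j a
  proof (cases "j = j0 \<and> a = a0")
    case True
    then show ?thesis using G_curve_left[OF gd_in[OF node(1,2)] c] unfolding \<gamma>_def dg_def by simp
  next
    case False
    then show ?thesis unfolding \<gamma>_def dg_def G_curve_def using that by (intro conjI exI[of _ 1]) auto
  qed
  have "((\<lambda>t. action m iv \<tau>inv Ld dt ds N A (\<gamma> t)) has_real_derivative 0) (at 0)"
    using stat unfolding stationary_def
  proof (elim allE[of _ dg] allE[of _ \<gamma>] mp, intro conjI)
    show "\<forall>j\<le>N. \<forall>a\<le>A. dg j a \<in> tangent_space G (gd j a)"
      using curves tangent_space_iff_G_curve by blast
    show "\<forall>j\<le>N. \<forall>a\<le>A. fixed j a \<longrightarrow> dg j a = 0" using node(3) unfolding dg_def by auto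
    show "\<exists>\<epsilon>>0. \<forall>t. \<bar>t\<bar> < \<epsilon> \<longrightarrow> (\<forall>j\<le>N. \<forall>a\<le>A. \<gamma> t j a \<in> G)"
      using \<epsilon> node unfolding \<gamma>_def by (intro exI[of _ \<epsilon>]) auto
    show "\<forall>j\<le>N. \<forall>a\<le>A. \<gamma> 0 j a = gd j a \<and> ((\<lambda>t. \<gamma> t j a) has_vector_derivative dg j a) (at 0)"
      using curves unfolding G_curve_def by blast
  qed
  moreover have "((\<lambda>t. action m iv \<tau>inv Ld dt ds N A (\<gamma> t)) has_real_derivative
      (\<Sum>j\<le>N. \<Sum>a\<le>A. nodal_EL j a (trivialize (gd j a) (dg j a)))) (at 0)"
    using action_variation curves by blast
  moreover have "nodal_EL j a (trivialize (gd j a) (dg j a))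
      = (if j = j0 then if a = a0 then nodal_EL j0 a0 \<zeta> else 0 else 0)" if "j \<le> N" "a \<le> A" for j a
    using trivialize_left[OF gd_in[OF node(1,2)] c] trivialize_zero nodal_EL_zero that
    unfolding dg_def by auto
  ultimately show ?thesis
    using DERIV_unique node(1,2) by (simp add: sum_if_const_cond)
qed

lemma stationary_iff_nodal_EL:
  "stationary G (action m iv \<tau>inv Ld dt ds N A) N A fixed gd \<longleftrightarrow>
     (\<forall>j\<le>N. \<forall>a\<le>A. \<not> fixed j a \<longrightarrow> (\<forall>\<zeta>\<in>lie_alg G e. nodal_EL j a \<zeta> = 0))"
  using stationary_if_nodal_EL nodal_EL_if_stationary by blast

lemma nodal_EL_interior:
  assumes "j \<in> {1..N-1}" "a \<in> {1..A-1}"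
  shows "nodal_EL j a \<zeta> = 0 \<longleftrightarrow>
     (1/dt) * (MU j a \<zeta> - Adstar m iv e (tau_xi (j-1) a) (MU (j-1) a) \<zeta>)
   + (1/ds) * (LAM j a \<zeta> - Adstar m iv e (tau_eta j (a-1)) (LAM j (a-1)) \<zeta>) = DG j a \<zeta>"
  using assms unfolding nodal_EL_def by (simp add: algebra_simps) linarith

lemma nodal_EL_side_a0:
  assumes "j \<in> {1..N-1}" "0 < A"
  shows "nodal_EL j 0 \<zeta> = 0 \<longleftrightarrow>
     (1/dt) * (MU j 0 \<zeta> - Adstar m iv e (tau_xi (j-1) 0) (MU (j-1) 0) \<zeta>) + (1/ds) * LAM j 0 \<zeta>
   = DG j 0 \<zeta>"
  using assms unfolding nodal_EL_def by (simp add: algebra_simps) linarith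

lemma nodal_EL_side_aA:
  assumes "j \<in> {1..N-1}" "0 < A"
  shows "nodal_EL j A \<zeta> = 0 \<longleftrightarrow> (1/ds) * Adstar m iv e (tau_eta j (A-1)) (LAM j (A-1)) \<zeta> = 0"
proof -
  have "0 < j" "j < N" using assms(1) by auto
  then show ?thesis using assms(2) unfolding nodal_EL_def by simp
qed

lemma nodal_EL_side_j0:
  assumes "a \<in> {1..A-1}" "0 < N"
  shows "nodal_EL 0 a \<zeta> = 0 \<longleftrightarrow>
     (1/dt) * MU 0 a \<zeta> + (1/ds) * (LAM 0 a \<zeta> - Adstar m iv e (tau_eta 0 (a-1)) (LAM 0 (a-1)) \<zeta>)
   = DG 0 a \<zeta>"
  using assms unfolding nodal_EL_def by (simp add: algebra_simps) linarith

lemma nodal_EL_side_jN: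
  assumes "a \<in> {1..A-1}" "0 < N"
  shows "nodal_EL N a \<zeta> = 0 \<longleftrightarrow> (1/dt) * Adstar m iv e (tau_xi (N-1) a) (MU (N-1) a) \<zeta> = 0"
proof -
  have "0 < a" "a < A" using assms(1) by auto
  then show ?thesis using assms(2) unfolding nodal_EL_def by simp
qed

lemma DCEL_iff_nodal_EL:
  "DCEL G m iv e \<tau> \<tau>inv Ld dt ds N A gd \<longleftrightarrow>
     (\<forall>j\<in>{1..N-1}. \<forall>a\<in>{1..A-1}. \<forall>\<zeta>\<in>lie_alg G e. nodal_EL j a \<zeta> = 0)"
  unfolding DCEL_def using nodal_EL_interior by simp

lemma boundary_B_iff_nodal_EL:
  assumes "0 < A"
  shows "boundary_B G m iv e \<tau> \<tau>inv Ld dt ds N A gd \<longleftrightarrow>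
     (\<forall>j\<in>{1..N-1}. (\<forall>\<zeta>\<in>lie_alg G e. nodal_EL j 0 \<zeta> = 0) \<and> (\<forall>\<zeta>\<in>lie_alg G e. nodal_EL j A \<zeta> = 0))"
  unfolding boundary_B_def using nodal_EL_side_a0[OF _ assms] nodal_EL_side_aA[OF _ assms] by auto

lemma boundary_C_iff_nodal_EL:
  assumes "0 < N"
  shows "boundary_C G m iv e \<tau> \<tau>inv Ld dt ds N A gd \<longleftrightarrow>
     (\<forall>a\<in>{1..A-1}. (\<forall>\<zeta>\<in>lie_alg G e. nodal_EL 0 a \<zeta> = 0) \<and> (\<forall>\<zeta>\<in>lie_alg G e. nodal_EL N a \<zeta> = 0))"
  unfolding boundary_C_def using nodal_EL_side_j0[OF _ assms] nodal_EL_side_jN[OF _ assms] by auto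

end

theorem mainTheorem12:
  fixes G :: "'e::euclidean_space set"
    and m :: "'e \<Rightarrow> 'e \<Rightarrow> 'e" and iv :: "'e \<Rightarrow> 'e" and e :: 'e
    and \<tau> \<tau>inv :: "'e \<Rightarrow> 'e" and U V :: "'e set"
    and Ld :: "nat \<Rightarrow> nat \<Rightarrow> 'e \<Rightarrow> 'e \<Rightarrow> 'e \<Rightarrow> real"
    and dt ds :: real and N A :: nat
    and gd :: "nat \<Rightarrow> nat \<Rightarrow> 'e"
  assumes "N \<ge> 2" and "A \<ge> 2"
    and "lie_group G m iv e"
    and "tau_chart G e \<tau> \<tau>inv U V"
    and "dt > 0" and "ds > 0"
    and "\<forall>j<N. \<forall>a<A. \<exists>W. G \<times> lie_alg G e \<times> lie_alg G e \<subseteq> W \<and>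
                         smooth_on W (\<lambda>(x, y, z). Ld j a x y z)"
    and "\<forall>j\<le>N. \<forall>a\<le>A. gd j a \<in> G"
    and "\<forall>j<N. \<forall>a<A. m (iv (gd j a)) (gd (Suc j) a) \<in> V \<and> m (iv (gd j a)) (gd j (Suc a)) \<in> V"
  shows "(stationary G (action m iv \<tau>inv Ld dt ds N A) N A
            (\<lambda>j a. j = 0 \<or> j = N \<or> a = 0 \<or> a = A) gd
          \<longleftrightarrow> DCEL G m iv e \<tau> \<tau>inv Ld dt ds N A gd)
       \<and> (stationary G (action m iv \<tau>inv Ld dt ds N A) N A
            (\<lambda>j a. j = 0 \<or> j = N) gd
          \<longleftrightarrow> DCEL G m iv e \<tau> \<tau>inv Ld dt ds N A gd \<and> boundary_B G m iv e \<tau> \<tau>inv Ld dt ds N A gd)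
       \<and> (stationary G (action m iv \<tau>inv Ld dt ds N A) N A
            (\<lambda>j a. a = 0 \<or> a = A) gd
          \<longleftrightarrow> DCEL G m iv e \<tau> \<tau>inv Ld dt ds N A gd \<and> boundary_C G m iv e \<tau> \<tau>inv Ld dt ds N A gd)"
proof -
  interpret discrete_field G m iv e \<tau> \<tau>inv U V Ld dt ds N A gd
    by unfold_locales (use assms in auto)
  have "0 < N" "0 < A" using assms(1,2) by auto
  then show ?thesis
    unfolding stationary_iff_nodal_EL free_nodes_fixed_boundary free_nodes_fixed_j_ends
      free_nodes_fixed_a_ends DCEL_iff_nodal_EL
    by (simp add: boundary_B_iff_nodal_EL boundary_C_iff_nodal_EL)
qed

end
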